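(* Let $f \in \mathbb{C}[x_1,\ldots,x_n]$ be a homogeneous polynomial of degree $d$ whose dimension of partial derivatives is exactly $w$, and let $A_1,\ldots,A_n \in \mathbb{C}^{w\times w}$ be the multiplication tables of the apolar ideal $f^{\perp} \subseteq \mathbb{C}[t_1,\ldots,t_n]$ of $f(t_1,\ldots,t_n)$. Define $$G(\mathbf{x},\mathbf{t}) := \prod_{i=1}^{n}\left(\sum_{k=0}^{d} \frac{1}{k!} t_i^k x_i^k\right).$$ Then there exists a vector $\mathbf{v}\in\mathbb{C}^w$ such that $$\sum_{j\in[w]} v_j \cdot G(x_1,\ldots,x_n,A_1,\ldots,A_n)[1,j] = f(\mathbf{x}),$$ where $G(\mathbf{x},A_1,\ldots,A_n)$ is the $w\times w$ matrix with entries in $\mathbb{C}[\mathbf{x}]$ obtained by substituting $A_i$ for $t_i$ (and the identity matrix for $1$), and $[1,j]$ denotes its $(1,j)$ entry.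
   Context: The dimension of partial derivatives of $f$ is $\dim_{\mathbb{C}}\mathrm{span}_{\mathbb{C}}\{\partial_{\mathbf{e}} f : \mathbf{e}\in\mathbb{N}^n\}$, where $\partial_{\mathbf{e}}$ is the partial derivative with respect to the monomial $\mathbf{x}^{\mathbf{e}}$ (with $\mathbf{e}=\mathbf{0}$ giving $f$). For $g = \sum_{\mathbf{e}} g_{\mathbf{e}}\mathbf{t}^{\mathbf{e}}$, the derivative operator $D_g := \sum_{\mathbf{e}} g_{\mathbf{e}} \partial_{\mathbf{e}}$. The apolar ideal $f^{\perp}\subseteq\mathbb{C}[\mathbf{t}]$ is the ideal generated by $\{h\in\mathbb{C}[\mathbf{t}] : D_h f(\mathbf{t}) \equiv 0\}$. Fix the degree-wise lexicographic monomial order on $\mathbb{C}[t_1,\ldots,t_n]$ with $t_1\prec t_2\prec\cdots\prec t_n$. The normal set of $f^{\perp}$ is the set of monomials that are not the leading monomial of any element of $f^{\perp}$; for $g\in\mathbb{C}[\mathbf{t}]$, $[g]$ denotes the unique polynomial supported on the normal set with $g-[g]\in f^{\perp}$. The normal set is finite with exactly $w$ elements; list them as $1 = m_1\prec m_2\prec\cdots\prec m_w$. The multiplication tables are the $w\times w$ matrices $A_\ell$, $\ell\in[n]$, with $A_\ell(i,j) :=$ the coefficient of $m_j$ in $[t_\ell\cdot m_i]$; these matrices pairwise commute. *)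

theory Defs
  imports Complex_Main "HOL-Library.Poly_Mapping" "Jordan_Normal_Form.Matrix"
begin

text \<open>Variable x_i (t_i) of the
  paper, i in [n], is the variable with index i-1 here.\<close>

type_synonym mono = "nat \<Rightarrow>\<^sub>0 nat"
type_synonym cpoly = "mono \<Rightarrow>\<^sub>0 complex"

definition const_poly :: "complex \<Rightarrow> cpoly" where
  "const_poly c = Poly_Mapping.single 0 c"

definition mono_poly :: "mono \<Rightarrow> cpoly" where
  "mono_poly m = Poly_Mapping.single m 1"

definition var_poly :: "nat \<Rightarrow> cpoly" where
  "var_poly i = mono_poly (Poly_Mapping.single i 1)"

definition tdeg :: "mono \<Rightarrow> nat" where
  "tdeg m = (\<Sum>i\<in>Poly_Mapping.keys m. Poly_Mapping.lookup m i)"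

definition in_vars :: "nat \<Rightarrow> cpoly \<Rightarrow> bool" where
  "in_vars n p \<longleftrightarrow> (\<forall>m\<in>Poly_Mapping.keys p. Poly_Mapping.keys m \<subseteq> {..<n})"

definition homogeneous :: "nat \<Rightarrow> cpoly \<Rightarrow> bool" where
  "homogeneous d p \<longleftrightarrow> (\<forall>m\<in>Poly_Mapping.keys p. tdeg m = d)"

definition mono_dvd :: "mono \<Rightarrow> mono \<Rightarrow> bool" where
  "mono_dvd e m \<longleftrightarrow> (\<forall>i. Poly_Mapping.lookup e i \<le> Poly_Mapping.lookup m i)"

definition pderiv_mono :: "mono \<Rightarrow> cpoly \<Rightarrow> cpoly" where
  "pderiv_mono e f =
     (\<Sum>m\<in>Poly_Mapping.keys f. if mono_dvd e m
        then Poly_Mapping.single (m - e)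
               (Poly_Mapping.lookup f m * of_nat (\<Prod>i\<in>Poly_Mapping.keys m. fact (Poly_Mapping.lookup m i) div fact (Poly_Mapping.lookup m i - Poly_Mapping.lookup e i)))
        else 0)"

definition deriv_op :: "cpoly \<Rightarrow> cpoly \<Rightarrow> cpoly" where
  "deriv_op g f = (\<Sum>e\<in>Poly_Mapping.keys g. const_poly (Poly_Mapping.lookup g e) * pderiv_mono e f)"

definition cscale :: "complex \<Rightarrow> cpoly \<Rightarrow> cpoly" where
  "cscale c p = const_poly c * p"

definition dim_partials :: "cpoly \<Rightarrow> nat" where
  "dim_partials f = vector_space.dim cscale {pderiv_mono e f | e. True}"

definition poly_ring :: "nat \<Rightarrow> cpoly set" where
  "poly_ring n = {p. in_vars n p}"

definition is_ideal :: "nat \<Rightarrow> cpoly set \<Rightarrow> bool" where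
  "is_ideal n I \<longleftrightarrow> I \<subseteq> poly_ring n \<and> 0 \<in> I \<and>
     (\<forall>a\<in>I. \<forall>b\<in>I. a + b \<in> I) \<and> (\<forall>r\<in>poly_ring n. \<forall>a\<in>I. r * a \<in> I)"

definition ideal_gen :: "nat \<Rightarrow> cpoly set \<Rightarrow> cpoly set" where
  "ideal_gen n S = \<Inter>{I. is_ideal n I \<and> S \<subseteq> I}"

definition apolar :: "nat \<Rightarrow> cpoly \<Rightarrow> cpoly set" where
  "apolar n f = ideal_gen n {h \<in> poly_ring n. deriv_op h f = 0}"

definition dlex_less :: "mono \<Rightarrow> mono \<Rightarrow> bool" where
  "dlex_less m m' \<longleftrightarrow> tdeg m < tdeg m' \<or>
     (tdeg m = tdeg m' \<and> (\<exists>i. Poly_Mapping.lookup m i < Poly_Mapping.lookup m' i \<and> (\<forall>j>i. Poly_Mapping.lookup m j = Poly_Mapping.lookup m' j)))"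

definition dlex_le :: "mono \<Rightarrow> mono \<Rightarrow> bool" where
  "dlex_le m m' \<longleftrightarrow> m = m' \<or> dlex_less m m'"

definition is_lead_mono :: "mono \<Rightarrow> cpoly \<Rightarrow> bool" where
  "is_lead_mono m g \<longleftrightarrow> m \<in> Poly_Mapping.keys g \<and> (\<forall>m'\<in>Poly_Mapping.keys g. dlex_le m' m)"

definition normal_set :: "nat \<Rightarrow> cpoly \<Rightarrow> mono set" where
  "normal_set n f = {m. Poly_Mapping.keys m \<subseteq> {..<n} \<and>
      \<not> (\<exists>g\<in>apolar n f. g \<noteq> 0 \<and> is_lead_mono m g)}"

definition normal_form :: "nat \<Rightarrow> cpoly \<Rightarrow> cpoly \<Rightarrow> cpoly" where
  "normal_form n f g = (THE r. Poly_Mapping.keys r \<subseteq> normal_set n f \<and> g - r \<in> apolar n f)"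

definition normal_mono :: "nat \<Rightarrow> cpoly \<Rightarrow> nat \<Rightarrow> mono" where
  "normal_mono n f k = (THE m. m \<in> normal_set n f \<and>
       card {m' \<in> normal_set n f. dlex_less m' m} = k)"

text \<open>Multiplication table A_l (l = 0..n-1 standing for t_1..t_n), as a w x w matrix with
  0-based indices: A_l(i,j) = coefficient of m_j in [t_l * m_i].\<close>
definition mult_table :: "nat \<Rightarrow> cpoly \<Rightarrow> nat \<Rightarrow> nat \<Rightarrow> complex mat" where
  "mult_table n f w l = mat w w (\<lambda>(i,j).
      Poly_Mapping.lookup (normal_form n f (var_poly l * mono_poly (normal_mono n f i))) (normal_mono n f j))"

definition lift_mat :: "complex mat \<Rightarrow> cpoly mat" where
  "lift_mat M = map_mat const_poly M"

definition G_factor :: "nat \<Rightarrow> nat \<Rightarrow> complex mat \<Rightarrow> nat \<Rightarrow> cpoly mat" where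
  "G_factor w d Ai i = foldr (+)
     (map (\<lambda>k. (const_poly (1 / fact k) * var_poly i ^ k) \<cdot>\<^sub>m lift_mat (Ai ^\<^sub>m k)) [0..<Suc d])
     (0\<^sub>m w w)"

definition G_subst :: "nat \<Rightarrow> nat \<Rightarrow> nat \<Rightarrow> (nat \<Rightarrow> complex mat) \<Rightarrow> cpoly mat" where
  "G_subst n w d A = foldr (*) (map (\<lambda>i. G_factor w d (A i) i) [0..<n]) (1\<^sub>m w)"

end

theory Submission
  imports Defs
begin

text \<open>The linear functional \<open>L(g) = (D\<^sub>g f)(0) = \<Sum>\<^sub>e g\<^sub>e e! f\<^sub>e\<close> vanishes on the apolar
  ideal, so it factors through normal forms: \<open>L(g) = \<Sum>\<^sub>j v\<^sub>j [g]\<^sub>j\<close> with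
  \<open>v\<^sub>j = m\<^sub>j! f\<^sub>m\<^sub>j\<close>, where \<open>[g]\<^sub>j\<close> is the coefficient of \<open>m\<^sub>j\<close> in \<open>[g]\<close>.
  Multiplication by \<open>t\<^sub>l\<close> acts on these coordinate rows as right multiplication by \<open>A\<^sub>l\<close>, and
  the coordinate row of \<open>[1]\<close> is the first unit vector. Expanding \<open>G(x, A)\<close> one factor at a
  time therefore gives \<open>\<Sum>\<^sub>j v\<^sub>j G[1, j] = \<Sum>\<^sub>e x\<^sup>e/e! L(t\<^sup>e) = \<Sum>\<^sub>e f\<^sub>e x\<^sup>e = f\<close>,
  where \<open>e\<close> ranges over exponents with all entries at most \<open>d\<close>; since \<open>f\<close> is homogeneous of
  degree \<open>d\<close>, truncating the exponentials at degree \<open>d\<close> loses no term of \<open>f\<close>.\<close>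

abbreviation lookup :: "('a \<Rightarrow>\<^sub>0 'b::zero) \<Rightarrow> 'a \<Rightarrow> 'b" where
  "lookup \<equiv> Poly_Mapping.lookup"

abbreviation keys :: "('a \<Rightarrow>\<^sub>0 'b::zero) \<Rightarrow> 'a set" where
  "keys \<equiv> Poly_Mapping.keys"

lemma poly_mapping_sum_single: "(\<Sum>k\<in>keys p. Poly_Mapping.single k (lookup p k)) = p"
  by (rule poly_mapping_eqI) (auto simp: lookup_sum lookup_single when_def in_keys_iff)

lemma keys_add_mono: "keys (a + b :: mono) = keys a \<union> keys b"
  by (auto simp: in_keys_iff lookup_add)

lemma const_poly_0 [simp]: "const_poly 0 = 0"
  by (simp add: const_poly_def)

lemma const_poly_1 [simp]: "const_poly 1 = 1"
  by (simp add: const_poly_def)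

lemma const_poly_add: "const_poly (a + b) = const_poly a + const_poly b"
  by (simp add: const_poly_def single_add)

lemma const_poly_mult: "const_poly (a * b) = const_poly a * const_poly b"
  by (simp add: const_poly_def mult_single)

lemma const_poly_sum: "const_poly (\<Sum>i\<in>I. a i) = (\<Sum>i\<in>I. const_poly (a i))"
  by (induction I rule: infinite_finite_induct) (simp_all add: const_poly_add)

lemma lookup_const_poly_mult: "lookup (const_poly c * p) m = c * lookup p m"
  unfolding const_poly_def mult_map_scale_conv_mult[symmetric]
  by (simp add: Poly_Mapping.map.rep_eq when_def)

lemma single_eq_const_poly_mult: "Poly_Mapping.single m c = const_poly c * mono_poly m"
  by (simp add: const_poly_def mono_poly_def mult_single)

lemma mono_poly_0 [simp]: "mono_poly 0 = 1"
  by (simp add: mono_poly_def)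

lemma mono_poly_mult: "mono_poly a * mono_poly b = mono_poly (a + b)"
  by (simp add: mono_poly_def mult_single)

lemma var_poly_power: "var_poly s ^ k = mono_poly (Poly_Mapping.single s k)"
  by (induction k) (simp_all add: var_poly_def mono_poly_mult single_add[symmetric])

lemma in_vars_add: "in_vars n p \<Longrightarrow> in_vars n q \<Longrightarrow> in_vars n (p + q)"
  unfolding in_vars_def using keys_add[of p q] by blast

lemma in_vars_diff: "in_vars n p \<Longrightarrow> in_vars n q \<Longrightarrow> in_vars n (p - q)"
  unfolding in_vars_def using keys_diff[of p q] by blast

lemma in_vars_mult: "in_vars n p \<Longrightarrow> in_vars n q \<Longrightarrow> in_vars n (p * q)"
  unfolding in_vars_def using keys_mult[of p q] by (force simp: keys_add_mono)

lemma in_vars_0 [simp]: "in_vars n 0"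
  by (simp add: in_vars_def)

lemma in_vars_1 [simp]: "in_vars n 1"
  by (simp add: in_vars_def)

lemma in_vars_power: "in_vars n p \<Longrightarrow> in_vars n (p ^ k)"
  by (induction k) (simp_all add: in_vars_mult)

lemma in_vars_sum: "(\<And>i. i \<in> I \<Longrightarrow> in_vars n (p i)) \<Longrightarrow> in_vars n (\<Sum>i\<in>I. p i)"
  by (induction I rule: infinite_finite_induct) (simp_all add: in_vars_add)

lemma in_vars_single: "keys m \<subseteq> {..<n} \<Longrightarrow> in_vars n (Poly_Mapping.single m c)"
  by (simp add: in_vars_def)

lemma in_vars_const_poly: "in_vars n (const_poly c)"
  by (simp add: in_vars_def const_poly_def)

lemma in_vars_mono_poly: "keys m \<subseteq> {..<n} \<Longrightarrow> in_vars n (mono_poly m)"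
  by (simp add: mono_poly_def in_vars_single)

lemma in_vars_var_poly: "l < n \<Longrightarrow> in_vars n (var_poly l)"
  by (simp add: var_poly_def in_vars_mono_poly)

lemma tdeg_superset: "finite S \<Longrightarrow> keys m \<subseteq> S \<Longrightarrow> tdeg m = (\<Sum>i\<in>S. lookup m i)"
  unfolding tdeg_def by (rule sum.mono_neutral_left) (auto simp: in_keys_iff)

lemma tdeg_add: "tdeg (a + b) = tdeg a + tdeg b"
proof -
  let ?S = "keys a \<union> keys b"
  have "tdeg (a + b) = (\<Sum>i\<in>?S. lookup a i + lookup b i)"
    by (simp add: tdeg_superset[of ?S] keys_add_mono lookup_add)
  also have "\<dots> = tdeg a + tdeg b"
    by (simp add: sum.distrib tdeg_superset[of ?S a] tdeg_superset[of ?S b])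
  finally show ?thesis .
qed

lemma lookup_le_tdeg: "lookup m i \<le> tdeg m"
  by (cases "i \<in> keys m") (auto simp: tdeg_def in_keys_iff intro: member_le_sum)

lemma tdeg_0 [simp]: "tdeg 0 = 0"
  by (simp add: tdeg_def)

lemma tdeg_eq_0_iff: "tdeg m = 0 \<longleftrightarrow> m = 0"
proof
  assume "tdeg m = 0"
  then show "m = 0"
    using lookup_le_tdeg[of m] by (intro poly_mapping_eqI) (metis le_zero_eq lookup_zero)
qed (simp add: tdeg_def)

lemma finite_bounded_monos: "finite {m :: mono. keys m \<subseteq> {..<n} \<and> tdeg m \<le> D}"
proof -
  let ?S = "{m :: mono. keys m \<subseteq> {..<n} \<and> tdeg m \<le> D}"
  let ?g = "\<lambda>m. restrict (lookup m) {..<n}"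
  have "inj_on ?g ?S"
  proof
    fix a b assume a: "a \<in> ?S" and b: "b \<in> ?S" and eq: "?g a = ?g b"
    show "a = b"
    proof (rule poly_mapping_eqI)
      fix i
      show "lookup a i = lookup b i"
      proof (cases "i < n")
        case True
        then show ?thesis using fun_cong[OF eq, of i] by simp
      next
        case False
        then have "i \<notin> keys a" "i \<notin> keys b" using a b by auto
        then show ?thesis by (simp add: in_keys_iff)
      qed
    qed
  qed
  moreover have "?g ` ?S \<subseteq> PiE {..<n} (\<lambda>_. {0..D})"
  proof (rule image_subsetI)
    fix m assume "m \<in> ?S"
    then have "lookup m i \<in> {0..D}" for i
      using lookup_le_tdeg[of m i] by auto
    then show "?g m \<in> PiE {..<n} (\<lambda>_. {0..D})"
      by (simp add: restrict_PiE_iff)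
  qed
  then have "finite (?g ` ?S)"
    by (rule finite_subset) (intro finite_PiE; simp)
  ultimately show ?thesis
    by (rule finite_imageD[rotated])
qed

definition mfact :: "mono \<Rightarrow> complex" where
  "mfact m = (\<Prod>i\<in>keys m. fact (lookup m i))"

lemma mfact_superset: "finite S \<Longrightarrow> keys m \<subseteq> S \<Longrightarrow> mfact m = (\<Prod>i\<in>S. fact (lookup m i))"
  unfolding mfact_def by (rule prod.mono_neutral_left) (auto simp: in_keys_iff)

lemma mfact_nonzero: "mfact m \<noteq> 0"
  by (simp add: mfact_def)

lemma mfact_0 [simp]: "mfact 0 = 1"
  by (simp add: mfact_def)

lemma mfact_add_single:
  assumes "s \<notin> keys b"
  shows "mfact (b + Poly_Mapping.single s k) = mfact b * fact k"
proof -
  have "mfact (b + Poly_Mapping.single s k) = (\<Prod>i\<in>insert s (keys b). fact (lookup (b + Poly_Mapping.single s k) i))"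
    by (rule mfact_superset) (auto simp: keys_add_mono)
  also have "\<dots> = fact k * (\<Prod>i\<in>keys b. fact (lookup (b + Poly_Mapping.single s k) i))"
    using assms by (simp add: lookup_add in_keys_iff)
  also have "(\<Prod>i\<in>keys b. fact (lookup (b + Poly_Mapping.single s k) i)) = (\<Prod>i\<in>keys b. (fact (lookup b i) :: complex))"
    using assms by (intro prod.cong refl) (auto simp: lookup_add lookup_single when_def)
  finally show ?thesis
    by (simp add: mfact_def mult.commute)
qed

lemma dlex_less_irrefl: "\<not> dlex_less m m"
  by (auto simp: dlex_less_def)

lemma dlex_less_imp_tdeg_le: "dlex_less a b \<Longrightarrow> tdeg a \<le> tdeg b"
  by (auto simp: dlex_less_def)

lemma not_dlex_less_0: "\<not> dlex_less m 0"
  by (auto simp: dlex_less_def tdeg_eq_0_iff)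

lemma dlex_less_trans:
  assumes ab: "dlex_less a b" and bc: "dlex_less b c"
  shows "dlex_less a c"
proof (cases "tdeg a < tdeg b \<or> tdeg b < tdeg c")
  case True
  then have "tdeg a < tdeg c"
    using dlex_less_imp_tdeg_le[OF ab] dlex_less_imp_tdeg_le[OF bc] by linarith
  then show ?thesis by (simp add: dlex_less_def)
next
  case False
  then have deg: "tdeg a = tdeg c"
    using ab bc unfolding dlex_less_def by linarith
  from False ab obtain i where i: "lookup a i < lookup b i" "\<And>k. k > i \<Longrightarrow> lookup a k = lookup b k"
    unfolding dlex_less_def by blast
  from False bc obtain j where j: "lookup b j < lookup c j" "\<And>k. k > j \<Longrightarrow> lookup b k = lookup c k"
    unfolding dlex_less_def by blast
  have "lookup a (max i j) < lookup c (max i j)"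
  proof (cases i j rule: linorder_cases)
    case less
    then show ?thesis using i(2)[of j] j(1) by (simp add: max_def)
  next
    case equal
    then show ?thesis using i(1) j(1) by simp
  next
    case greater
    then show ?thesis using i(1) j(2)[of i] by (simp add: max_def)
  qed
  moreover have "lookup a k = lookup c k" if "k > max i j" for k
    using i(2)[of k] j(2)[of k] that by simp
  ultimately show ?thesis
    unfolding dlex_less_def using deg by blast
qed

lemma dlex_less_linear:
  assumes "a \<noteq> b"
  shows "dlex_less a b \<or> dlex_less b a"
proof (cases "tdeg a = tdeg b")
  case True
  let ?D = "{i. lookup a i \<noteq> lookup b i}"
  have fin: "finite ?D"
    by (rule finite_subset[of _ "keys a \<union> keys b"]) (auto simp: in_keys_iff)
  have "?D \<noteq> {}"
  proof
    assume "?D = {}"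
    then have "a = b"
      by (intro poly_mapping_eqI) blast
    with assms show False ..
  qed
  then have max: "lookup a (Max ?D) \<noteq> lookup b (Max ?D)"
    using Max_in[OF fin] by blast
  have above: "lookup a k = lookup b k" if "k > Max ?D" for k
    using Max_ge[OF fin, of k] that by (metis (mono_tags) mem_Collect_eq not_le)
  show ?thesis
  proof (cases "lookup a (Max ?D) < lookup b (Max ?D)")
    case True
    then show ?thesis
      unfolding dlex_less_def using \<open>tdeg a = tdeg b\<close> above by blast
  next
    case False
    then have "lookup b (Max ?D) < lookup a (Max ?D)"
      using max by simp
    then show ?thesis
      unfolding dlex_less_def using \<open>tdeg a = tdeg b\<close> above by (metis (no_types))
  qed
qed (auto simp: dlex_less_def)

lemma finite_dlex_max:
  assumes "finite S" "S \<noteq> {}"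
  obtains m where "m \<in> S" "\<And>m'. m' \<in> S \<Longrightarrow> dlex_le m' m"
  using assms
proof (induction S arbitrary: thesis rule: finite_ne_induct)
  case (singleton x)
  then show ?case by (simp add: dlex_le_def)
next
  case (insert x F)
  then obtain m where m: "m \<in> F" "\<And>m'. m' \<in> F \<Longrightarrow> dlex_le m' m"
    by blast
  show ?case
  proof (cases "dlex_less m x")
    case True
    then have "dlex_le m' x" if "m' \<in> insert x F" for m'
      using m(2)[of m'] that by (auto simp: dlex_le_def intro: dlex_less_trans)
    then show ?thesis
      using insert.prems by blast
  next
    case False
    then have "dlex_le x m"
      using dlex_less_linear[of m x] by (auto simp: dlex_le_def)
    then show ?thesis
      using m insert.prems by blast
  qed
qed

lemma wf_dlex_less: "wf {(a, b). keys a \<subseteq> {..<n} \<and> dlex_less a b}"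
proof (rule wf_finite_segments)
  show "irrefl {(a, b). keys a \<subseteq> {..<n} \<and> dlex_less a b}"
    by (simp add: irrefl_def dlex_less_irrefl)
  show "trans {(a, b). keys a \<subseteq> {..<n} \<and> dlex_less a b}"
    by (auto simp: trans_def intro: dlex_less_trans)
  show "finite {a. (a, b) \<in> {(a, b). keys a \<subseteq> {..<n} \<and> dlex_less a b}}" for b
    by (rule finite_subset[OF _ finite_bounded_monos[of n "tdeg b"]]) (auto dest: dlex_less_imp_tdeg_le)
qed

subsection \<open>Apolarity\<close>

text \<open>Coefficients in the divided-power basis \<open>x^m/m!\<close>, on which every \<open>pderiv_mono e\<close>
  acts as the shift \<open>m \<mapsto> m + e\<close>.\<close>
definition dp_coeff :: "cpoly \<Rightarrow> mono \<Rightarrow> complex" where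
  "dp_coeff p m = lookup p m * mfact m"

lemma poly_eq_iff_dp_coeff: "p = q \<longleftrightarrow> (\<forall>m. dp_coeff p m = dp_coeff q m)"
  by (auto simp: dp_coeff_def mfact_nonzero intro: poly_mapping_eqI)

lemma dp_coeff_0 [simp]: "dp_coeff 0 m = 0"
  by (simp add: dp_coeff_def)

lemma dp_coeff_add: "dp_coeff (p + q) m = dp_coeff p m + dp_coeff q m"
  by (simp add: dp_coeff_def lookup_add distrib_right)

lemma dp_coeff_const_poly_mult: "dp_coeff (const_poly c * p) m = c * dp_coeff p m"
  by (simp add: dp_coeff_def lookup_const_poly_mult)

lemma lookup_pderiv_mono:
  "lookup (pderiv_mono e f) c = lookup f (c + e) *
     of_nat (\<Prod>i\<in>keys (c + e). fact (lookup (c + e) i) div fact (lookup (c + e) i - lookup e i))"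
proof -
  define q where "q m = (of_nat (\<Prod>i\<in>keys m. fact (lookup m i) div fact (lookup m i - lookup e i)) :: complex)" for m
  have "lookup (if mono_dvd e m then Poly_Mapping.single (m - e) (lookup f m * q m) else 0) c
      = (if m = c + e then lookup f m * q m else 0)" for m
  proof (cases "mono_dvd e m")
    case True
    then have "m = (m - e) + e"
      by (intro poly_mapping_eqI) (auto simp: mono_dvd_def lookup_add lookup_minus)
    then have "m - e = c \<longleftrightarrow> m = c + e"
      by (metis add_diff_cancel_right')
    then show ?thesis
      using True by (auto simp: lookup_single when_def)
  next
    case False
    then have "m \<noteq> c + e"
      by (auto simp: mono_dvd_def lookup_add)
    then show ?thesis
      using False by simp
  qed
  then have "lookup (pderiv_mono e f) c = (\<Sum>m\<in>keys f. if m = c + e then lookup f m * q m else 0)"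
    unfolding pderiv_mono_def lookup_sum q_def[symmetric] by simp
  also have "\<dots> = lookup f (c + e) * q (c + e)"
    by (auto simp: in_keys_iff)
  finally show ?thesis
    by (simp add: q_def)
qed

lemma dp_coeff_pderiv_mono: "dp_coeff (pderiv_mono e f) c = dp_coeff f (c + e)"
proof -
  have "of_nat (\<Prod>i\<in>keys (c + e). fact (lookup (c + e) i) div fact (lookup (c + e) i - lookup e i)) * mfact c
      = (\<Prod>i\<in>keys (c + e). of_nat (fact (lookup c i + lookup e i) div fact (lookup c i)) * (fact (lookup c i) :: complex))"
    by (simp add: lookup_add mfact_superset[of "keys (c + e)" c] keys_add_mono prod.distrib)
  also have "\<dots> = (\<Prod>i\<in>keys (c + e). fact (lookup c i + lookup e i))"
  proof (rule prod.cong[OF refl])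
    fix i
    have "fact (lookup c i) dvd (fact (lookup c i + lookup e i) :: nat)"
      by (simp add: fact_dvd)
    then show "of_nat (fact (lookup c i + lookup e i) div fact (lookup c i)) * fact (lookup c i)
        = (fact (lookup c i + lookup e i) :: complex)"
      by (metis dvd_div_mult_self of_nat_fact of_nat_mult)
  qed
  also have "\<dots> = mfact (c + e)"
    by (simp add: mfact_def lookup_add)
  finally show ?thesis
    by (simp add: dp_coeff_def lookup_pderiv_mono mult.assoc)
qed

definition pairing :: "cpoly \<Rightarrow> (mono \<Rightarrow> complex) \<Rightarrow> complex" where
  "pairing h \<phi> = (\<Sum>e\<in>keys h. lookup h e * \<phi> e)"

lemma pairing_superset: "finite S \<Longrightarrow> keys h \<subseteq> S \<Longrightarrow> pairing h \<phi> = (\<Sum>e\<in>S. lookup h e * \<phi> e)"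
  unfolding pairing_def by (rule sum.mono_neutral_left) (auto simp: in_keys_iff)

lemma pairing_0 [simp]: "pairing 0 \<phi> = 0"
  by (simp add: pairing_def)

lemma pairing_single [simp]: "pairing (Poly_Mapping.single e c) \<phi> = c * \<phi> e"
  by (simp add: pairing_def)

lemma pairing_mono_poly [simp]: "pairing (mono_poly e) \<phi> = \<phi> e"
  by (simp add: mono_poly_def)

lemma pairing_add: "pairing (a + b) \<phi> = pairing a \<phi> + pairing b \<phi>"
proof -
  let ?S = "keys a \<union> keys b"
  have "pairing (a + b) \<phi> = (\<Sum>e\<in>?S. lookup a e * \<phi> e + lookup b e * \<phi> e)"
    using keys_add[of a b] by (simp add: pairing_superset[of ?S] lookup_add distrib_right)
  also have "\<dots> = pairing a \<phi> + pairing b \<phi>"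
    by (simp add: sum.distrib pairing_superset[of ?S a] pairing_superset[of ?S b])
  finally show ?thesis .
qed

lemma pairing_sum: "pairing (\<Sum>i\<in>I. p i) \<phi> = (\<Sum>i\<in>I. pairing (p i) \<phi>)"
  by (induction I rule: infinite_finite_induct) (simp_all add: pairing_add)

lemma pairing_const_poly_mult: "pairing (const_poly c * h) \<phi> = c * pairing h \<phi>"
proof -
  have "keys (const_poly c * h) \<subseteq> keys h"
    by (auto simp: in_keys_iff lookup_const_poly_mult)
  then have "pairing (const_poly c * h) \<phi> = (\<Sum>e\<in>keys h. c * lookup h e * \<phi> e)"
    by (simp add: pairing_superset[of "keys h"] lookup_const_poly_mult)
  then show ?thesis
    by (simp add: pairing_def sum_distrib_left mult.assoc)
qed

lemma pairing_mult: "pairing (r * a) \<phi> = pairing r (\<lambda>b. pairing a (\<lambda>e. \<phi> (b + e)))"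
proof -
  have "r * a = (\<Sum>b\<in>keys r. Poly_Mapping.single b (lookup r b)) * (\<Sum>e\<in>keys a. Poly_Mapping.single e (lookup a e))"
    by (simp add: poly_mapping_sum_single)
  also have "\<dots> = (\<Sum>b\<in>keys r. \<Sum>e\<in>keys a. Poly_Mapping.single (b + e) (lookup r b * lookup a e))"
    by (simp add: sum_product mult_single)
  finally have "pairing (r * a) \<phi> = (\<Sum>b\<in>keys r. \<Sum>e\<in>keys a. lookup r b * lookup a e * \<phi> (b + e))"
    by (simp add: pairing_sum)
  then show ?thesis
    by (simp add: pairing_def sum_distrib_left mult.assoc)
qed

lemma dp_coeff_deriv_op: "dp_coeff (deriv_op h f) c = pairing h (\<lambda>e. dp_coeff f (c + e))"
proof -
  have "dp_coeff (deriv_op h f) c = (\<Sum>e\<in>keys h. lookup h e * dp_coeff (pderiv_mono e f) c)"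
    by (simp add: deriv_op_def dp_coeff_def lookup_sum lookup_const_poly_mult sum_distrib_right mult.assoc)
  then show ?thesis
    by (simp add: dp_coeff_pderiv_mono pairing_def)
qed

lemma lookup_deriv_op_0: "lookup (deriv_op g f) 0 = pairing g (dp_coeff f)"
  using dp_coeff_deriv_op[of g f 0] by (simp add: dp_coeff_def[of "deriv_op g f"])

lemma deriv_op_0 [simp]: "deriv_op 0 f = 0"
  by (simp add: deriv_op_def)

lemma deriv_op_right_0 [simp]: "deriv_op h 0 = 0"
  by (simp add: deriv_op_def pderiv_mono_def)

lemma deriv_op_mono_poly: "deriv_op (mono_poly e) f = pderiv_mono e f"
  by (simp add: deriv_op_def mono_poly_def)

lemma deriv_op_1 [simp]: "deriv_op 1 f = f"
  using deriv_op_mono_poly[of 0 f] by (simp add: poly_eq_iff_dp_coeff dp_coeff_pderiv_mono)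

lemma deriv_op_add: "deriv_op (a + b) f = deriv_op a f + deriv_op b f"
  by (simp add: poly_eq_iff_dp_coeff dp_coeff_deriv_op dp_coeff_add pairing_add)

lemma deriv_op_diff: "deriv_op (a - b) f = deriv_op a f - deriv_op b f"
  using deriv_op_add[of "a - b" b f] by simp

lemma deriv_op_sum: "deriv_op (\<Sum>i\<in>I. p i) f = (\<Sum>i\<in>I. deriv_op (p i) f)"
  by (induction I rule: infinite_finite_induct) (simp_all add: deriv_op_add)

lemma deriv_op_const_poly_mult: "deriv_op (const_poly c * a) f = const_poly c * deriv_op a f"
  by (simp add: poly_eq_iff_dp_coeff dp_coeff_deriv_op dp_coeff_const_poly_mult pairing_const_poly_mult)

lemma deriv_op_mult: "deriv_op (r * a) f = deriv_op r (deriv_op a f)"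
  by (simp add: poly_eq_iff_dp_coeff dp_coeff_deriv_op pairing_mult add.assoc)

lemma ideal_gen_ideal: "is_ideal n I \<Longrightarrow> ideal_gen n I = I"
  by (auto simp: ideal_gen_def)

text \<open>Since \<open>D\<^sub>r\<^sub>a = D\<^sub>r \<circ> D\<^sub>a\<close>, the annihilator of \<open>f\<close> is already an ideal, hence equal
  to the ideal it generates.\<close>
lemma mem_apolar_iff: "h \<in> apolar n f \<longleftrightarrow> in_vars n h \<and> deriv_op h f = 0"
proof -
  let ?K = "{h \<in> poly_ring n. deriv_op h f = 0}"
  have "is_ideal n ?K"
    by (auto simp: is_ideal_def poly_ring_def in_vars_add in_vars_mult deriv_op_add deriv_op_mult)
  then show ?thesis
    by (simp add: apolar_def ideal_gen_ideal poly_ring_def)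
qed

lemma zero_in_apolar [simp]: "0 \<in> apolar n f"
  by (simp add: mem_apolar_iff)

lemma apolar_add: "a \<in> apolar n f \<Longrightarrow> b \<in> apolar n f \<Longrightarrow> a + b \<in> apolar n f"
  by (simp add: mem_apolar_iff in_vars_add deriv_op_add)

lemma apolar_diff: "a \<in> apolar n f \<Longrightarrow> b \<in> apolar n f \<Longrightarrow> a - b \<in> apolar n f"
  by (simp add: mem_apolar_iff in_vars_diff deriv_op_diff)

lemma apolar_mult: "in_vars n r \<Longrightarrow> a \<in> apolar n f \<Longrightarrow> r * a \<in> apolar n f"
  by (simp add: mem_apolar_iff in_vars_mult deriv_op_mult)

lemma apolar_const_poly_mult: "a \<in> apolar n f \<Longrightarrow> const_poly c * a \<in> apolar n f"
  by (simp add: apolar_mult in_vars_const_poly)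

lemma apolar_sum: "(\<And>i. i \<in> I \<Longrightarrow> p i \<in> apolar n f) \<Longrightarrow> (\<Sum>i\<in>I. p i) \<in> apolar n f"
  by (induction I rule: infinite_finite_induct) (simp_all add: apolar_add)

subsection \<open>Normal forms\<close>

lemma lead_mono_exists: "h \<noteq> 0 \<Longrightarrow> \<exists>m. is_lead_mono m h"
  using finite_dlex_max[of "keys h"] by (metis finite_keys keys_eq_empty is_lead_mono_def)

lemma normal_remainder_unique:
  assumes "keys r \<subseteq> normal_set n f" "keys r' \<subseteq> normal_set n f" "r - r' \<in> apolar n f"
  shows "r = r'"
proof (rule ccontr)
  assume "r \<noteq> r'"
  then obtain m where m: "is_lead_mono m (r - r')"
    using lead_mono_exists by fastforce
  then have "m \<in> normal_set n f"
    using keys_diff[of r r'] assms(1,2) by (auto simp: is_lead_mono_def)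
  then show False
    using m assms(3) \<open>r \<noteq> r'\<close> by (auto simp: normal_set_def)
qed

lemma apolar_reduction_step:
  assumes g: "in_vars n g" and M: "M \<in> keys g - normal_set n f"
    and max: "\<And>m. m \<in> keys g - normal_set n f \<Longrightarrow> dlex_le m M"
  obtains g' where "in_vars n g'" "g - g' \<in> apolar n f"
    "\<And>m. m \<in> keys g' - normal_set n f \<Longrightarrow> dlex_less m M"
proof -
  have "keys M \<subseteq> {..<n}"
    using M g by (auto simp: in_vars_def)
  then obtain h where h: "h \<in> apolar n f" "h \<noteq> 0" "is_lead_mono M h"
    using M by (auto simp: normal_set_def)
  define g' where "g' = g - const_poly (lookup g M / lookup h M) * h"
  have "lookup h M \<noteq> 0"
    using h(3) by (simp add: is_lead_mono_def in_keys_iff)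
  then have "lookup g' M = 0"
    by (simp add: g'_def lookup_minus lookup_const_poly_mult)
  moreover have "keys g' \<subseteq> keys g \<union> keys h"
    using keys_diff[of g] by (auto simp: g'_def in_keys_iff lookup_minus lookup_const_poly_mult)
  ultimately have "dlex_less m M" if m: "m \<in> keys g' - normal_set n f" for m
  proof -
    have "m \<noteq> M"
      using m \<open>lookup g' M = 0\<close> by (auto simp: in_keys_iff)
    moreover have "dlex_le m M"
      using m \<open>keys g' \<subseteq> keys g \<union> keys h\<close> max h(3) by (auto simp: is_lead_mono_def)
    ultimately show ?thesis
      by (simp add: dlex_le_def)
  qed
  moreover have "g - g' \<in> apolar n f"
    by (simp add: g'_def apolar_const_poly_mult h(1))
  moreover have "in_vars n g'"
    using g h(1) by (simp add: g'_def mem_apolar_iff in_vars_diff in_vars_mult in_vars_const_poly)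
  ultimately show ?thesis
    using that by blast
qed

lemma normal_remainder_exists_below:
  assumes "in_vars n g" "\<And>m. m \<in> keys g - normal_set n f \<Longrightarrow> dlex_less m M"
  shows "\<exists>r. keys r \<subseteq> normal_set n f \<and> g - r \<in> apolar n f"
  using assms
proof (induction M arbitrary: g rule: wf_induct_rule[OF wf_dlex_less[of n]])
  case (1 M)
  show ?case
  proof (cases "keys g - normal_set n f = {}")
    case True
    then show ?thesis
      using "1.prems"(1) by (intro exI[of _ g]) (auto simp: mem_apolar_iff)
  next
    case False
    obtain M0 where M0: "M0 \<in> keys g - normal_set n f"
      "\<And>m. m \<in> keys g - normal_set n f \<Longrightarrow> dlex_le m M0"
      using finite_dlex_max[OF finite_Diff[OF finite_keys] False] by blast
    obtain g' where g': "in_vars n g'" "g - g' \<in> apolar n f"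
      "\<And>m. m \<in> keys g' - normal_set n f \<Longrightarrow> dlex_less m M0"
      using apolar_reduction_step[OF "1.prems"(1) M0] by blast
    have "keys M0 \<subseteq> {..<n}" "dlex_less M0 M"
      using M0(1) "1.prems" by (auto simp: in_vars_def)
    then obtain r where "keys r \<subseteq> normal_set n f" "g' - r \<in> apolar n f"
      using "1.IH"[of M0] g' by blast
    moreover have "g - r = (g - g') + (g' - r)"
      by simp
    ultimately show ?thesis
      using apolar_add g'(2) by metis
  qed
qed

lemma normal_remainder_exists:
  assumes "in_vars n g"
  shows "\<exists>r. keys r \<subseteq> normal_set n f \<and> g - r \<in> apolar n f"
proof (cases "keys g - normal_set n f = {}")
  case True
  then show ?thesis
    using assms by (intro exI[of _ g]) (auto simp: mem_apolar_iff)
next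
  case False
  obtain M where M: "M \<in> keys g - normal_set n f"
    "\<And>m. m \<in> keys g - normal_set n f \<Longrightarrow> dlex_le m M"
    using finite_dlex_max[OF finite_Diff[OF finite_keys] False] by blast
  obtain g' where g': "in_vars n g'" "g - g' \<in> apolar n f"
    "\<And>m. m \<in> keys g' - normal_set n f \<Longrightarrow> dlex_less m M"
    using apolar_reduction_step[OF assms M] by blast
  then obtain r where "keys r \<subseteq> normal_set n f" "g' - r \<in> apolar n f"
    using normal_remainder_exists_below by blast
  moreover have "g - r = (g - g') + (g' - r)"
    by simp
  ultimately show ?thesis
    using apolar_add g'(2) by metis
qed

lemma normal_form_eqI:
  assumes "keys r \<subseteq> normal_set n f" "g - r \<in> apolar n f"
  shows "normal_form n f g = r"
  unfolding normal_form_def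
proof (rule the_equality)
  fix r' assume r': "keys r' \<subseteq> normal_set n f \<and> g - r' \<in> apolar n f"
  have "r' - r = (g - r) - (g - r')"
    by simp
  then have "r' - r \<in> apolar n f"
    using apolar_diff assms(2) r' by metis
  then show "r' = r"
    using normal_remainder_unique assms(1) r' by blast
qed (use assms in blast)

lemma normal_form:
  assumes "in_vars n g"
  shows "keys (normal_form n f g) \<subseteq> normal_set n f" and "g - normal_form n f g \<in> apolar n f"
  using normal_remainder_exists[OF assms] normal_form_eqI by metis+

lemma mono_poly_in_apolar_if_tdeg_gt:
  assumes "homogeneous d f" "keys m \<subseteq> {..<n}" "tdeg m > d"
  shows "mono_poly m \<in> apolar n f"
proof -
  have "dp_coeff f (c + m) = 0" for c
  proof -
    have "c + m \<notin> keys f"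
      using assms(1,3) by (auto simp: homogeneous_def tdeg_add)
    then show ?thesis
      by (simp add: dp_coeff_def in_keys_iff)
  qed
  then have "pderiv_mono m f = 0"
    by (simp add: poly_eq_iff_dp_coeff dp_coeff_pderiv_mono)
  then show ?thesis
    using assms(2) by (simp add: mem_apolar_iff in_vars_mono_poly deriv_op_mono_poly)
qed

lemma tdeg_le_if_in_normal_set:
  assumes "homogeneous d f" "m \<in> normal_set n f"
  shows "tdeg m \<le> d"
proof (rule ccontr)
  assume "\<not> tdeg m \<le> d"
  then have "mono_poly m \<in> apolar n f"
    using assms by (intro mono_poly_in_apolar_if_tdeg_gt) (auto simp: normal_set_def)
  moreover have "mono_poly m \<noteq> 0"
    by (metis mono_poly_def lookup_single_eq lookup_zero zero_neq_one)
  moreover have "is_lead_mono m (mono_poly m)"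
    by (simp add: mono_poly_def is_lead_mono_def dlex_le_def)
  ultimately show False
    using assms(2) by (auto simp: normal_set_def)
qed

lemma finite_normal_set: "homogeneous d f \<Longrightarrow> finite (normal_set n f)"
  by (rule finite_subset[OF _ finite_bounded_monos[of n d]])
    (auto simp: tdeg_le_if_in_normal_set normal_set_def)

lemma zero_in_normal_set:
  assumes "f \<noteq> 0"
  shows "0 \<in> normal_set n f"
proof -
  have "\<not> is_lead_mono 0 h" if h: "h \<in> apolar n f" "h \<noteq> 0" for h
  proof
    assume lead: "is_lead_mono 0 h"
    then have "keys h = {0}"
      by (auto simp: is_lead_mono_def dlex_le_def not_dlex_less_0)
    then have "h = const_poly (lookup h 0)"
      by (intro poly_mapping_eqI)
        (auto simp: const_poly_def lookup_single when_def not_in_keys_iff_lookup_eq_zero[symmetric])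
    moreover have "lookup h 0 \<noteq> 0"
      using \<open>keys h = {0}\<close> by (auto simp: in_keys_iff)
    moreover have "deriv_op (const_poly c) f = const_poly c * f" for c
      using deriv_op_const_poly_mult[of c 1 f] by simp
    ultimately have "const_poly (lookup h 0) * f = 0"
      using h(1) by (metis mem_apolar_iff)
    then show False
      using assms \<open>lookup h 0 \<noteq> 0\<close> by (auto simp: poly_eq_iff_dp_coeff dp_coeff_const_poly_mult)
  qed
  then show ?thesis
    by (auto simp: normal_set_def)
qed

subsection \<open>The dimension of the space of partial derivatives\<close>

lemma vector_space_cscale: "vector_space cscale"
  by unfold_locales
    (simp_all add: cscale_def const_poly_def distrib_left distrib_right single_add mult.assoc mult_single)

lemma pderiv_mono_eq_0:
  assumes "in_vars n f" "\<not> keys e \<subseteq> {..<n}"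
  shows "pderiv_mono e f = 0"
proof -
  have "c + e \<notin> keys f" for c
  proof
    assume "c + e \<in> keys f"
    then have "keys (c + e) \<subseteq> {..<n}"
      using assms(1) by (auto simp: in_vars_def)
    then show False
      using assms(2) by (auto simp: keys_add_mono)
  qed
  then have "dp_coeff f (c + e) = 0" for c
    by (simp add: dp_coeff_def in_keys_iff)
  then show ?thesis
    by (simp add: poly_eq_iff_dp_coeff dp_coeff_pderiv_mono)
qed

lemma deriv_op_combination:
  "deriv_op (\<Sum>m\<in>S. Poly_Mapping.single m (c m)) f = (\<Sum>m\<in>S. cscale (c m) (pderiv_mono m f))"
  by (simp add: deriv_op_sum single_eq_const_poly_mult deriv_op_const_poly_mult deriv_op_mono_poly cscale_def)

lemma normal_partials_independent:
  assumes "finite (normal_set n f)" "(\<Sum>m\<in>normal_set n f. cscale (c m) (pderiv_mono m f)) = 0"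
    and "m \<in> normal_set n f"
  shows "c m = 0"
proof -
  let ?h = "\<Sum>m\<in>normal_set n f. Poly_Mapping.single m (c m)"
  have "in_vars n ?h"
    by (intro in_vars_sum in_vars_single) (simp add: normal_set_def)
  then have "?h \<in> apolar n f"
    using assms(2) by (simp add: mem_apolar_iff deriv_op_combination)
  moreover have "keys ?h \<subseteq> normal_set n f"
    using keys_sum[of "\<lambda>m. Poly_Mapping.single m (c m)" "normal_set n f"] by (auto split: if_splits)
  ultimately have "?h = 0"
    using normal_remainder_unique[of ?h n f 0] by simp
  moreover have "lookup ?h m = c m"
    using assms(1,3) by (simp add: lookup_sum lookup_single when_def)
  ultimately show ?thesis
    by simp
qed

lemma dim_partials_eq_card_normal_set:
  assumes "in_vars n f" "finite (normal_set n f)"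
  shows "dim_partials f = card (normal_set n f)"
proof -
  interpret V: vector_space cscale
    by (rule vector_space_cscale)
  let ?B = "(\<lambda>m. pderiv_mono m f) ` normal_set n f"
  have inj: "inj_on (\<lambda>m. pderiv_mono m f) (normal_set n f)"
  proof (rule inj_onI, rule ccontr)
    fix m1 m2
    assume m: "m1 \<in> normal_set n f" "m2 \<in> normal_set n f" "pderiv_mono m1 f = pderiv_mono m2 f" "m1 \<noteq> m2"
    define c where "c m = (if m = m1 then 1 else if m = m2 then -1 else 0 :: complex)" for m
    have "(\<Sum>m\<in>normal_set n f. cscale (c m) (pderiv_mono m f)) = (\<Sum>m\<in>{m1, m2}. cscale (c m) (pderiv_mono m f))"
      using m assms(2) by (intro sum.mono_neutral_right) (auto simp: c_def cscale_def)
    also have "\<dots> = 0"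
      using m by (simp add: c_def cscale_def const_poly_def single_uminus)
    finally have "c m1 = 0"
      by (rule normal_partials_independent[OF assms(2) _ m(1)])
    then show False
      by (simp add: c_def)
  qed
  have span: "pderiv_mono e f \<in> V.span ?B" for e
  proof (cases "keys e \<subseteq> {..<n}")
    case False
    then show ?thesis
      using pderiv_mono_eq_0[OF assms(1) False] V.span_zero by simp
  next
    case True
    define r where "r = normal_form n f (mono_poly e)"
    have r: "keys r \<subseteq> normal_set n f" "mono_poly e - r \<in> apolar n f"
      using normal_form[OF in_vars_mono_poly[OF True]] by (simp_all add: r_def)
    have "pderiv_mono e f = deriv_op r f"
      using r(2) by (simp add: mem_apolar_iff deriv_op_diff deriv_op_mono_poly)
    also have "\<dots> = (\<Sum>m\<in>keys r. cscale (lookup r m) (pderiv_mono m f))"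
      using deriv_op_combination[of "lookup r" "keys r" f] by (simp add: poly_mapping_sum_single)
    also have "\<dots> \<in> V.span ?B"
      using r(1) by (intro V.span_sum V.span_scale V.span_base) auto
    finally show ?thesis .
  qed
  have "V.dim {pderiv_mono e f | e. True} = card ?B"
  proof (rule V.dim_unique)
    show "?B \<subseteq> {pderiv_mono e f | e. True}"
      by blast
    show "{pderiv_mono e f | e. True} \<subseteq> V.span ?B"
      using span by blast
    show "V.independent ?B"
    proof (rule V.independent_if_scalars_zero)
      show "finite ?B"
        using assms(2) by simp
      fix u x
      assume "(\<Sum>x\<in>?B. cscale (u x) x) = 0" "x \<in> ?B"
      then show "u x = 0"
        using normal_partials_independent[OF assms(2), of "\<lambda>m. u (pderiv_mono m f)"]
        by (auto simp: sum.reindex[OF inj])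
    qed
  qed (rule refl)
  then show ?thesis
    by (simp add: dim_partials_def card_image[OF inj])
qed

definition dlex_rank :: "mono set \<Rightarrow> mono \<Rightarrow> nat" where
  "dlex_rank S m = card {m' \<in> S. dlex_less m' m}"

lemma dlex_rank_less:
  assumes "finite S" "m1 \<in> S" "dlex_less m1 m2"
  shows "dlex_rank S m1 < dlex_rank S m2"
  unfolding dlex_rank_def
proof (rule psubset_card_mono)
  show "finite {m' \<in> S. dlex_less m' m2}"
    using assms(1) by simp
  have "m1 \<in> {m' \<in> S. dlex_less m' m2} - {m' \<in> S. dlex_less m' m1}"
    using assms(2,3) dlex_less_irrefl by simp
  then show "{m' \<in> S. dlex_less m' m1} \<subset> {m' \<in> S. dlex_less m' m2}"
    using assms(3) by (auto intro: dlex_less_trans)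
qed

lemma bij_betw_dlex_rank:
  assumes "finite S"
  shows "bij_betw (dlex_rank S) S {..<card S}"
proof -
  have inj: "inj_on (dlex_rank S) S"
    by (rule inj_onI) (metis assms dlex_less_linear dlex_rank_less less_irrefl)
  have "dlex_rank S m < card S" if "m \<in> S" for m
    unfolding dlex_rank_def using assms that dlex_less_irrefl by (intro psubset_card_mono) auto
  then have "dlex_rank S ` S \<subseteq> {..<card S}"
    by auto
  moreover have "card (dlex_rank S ` S) = card {..<card S}"
    by (simp add: card_image[OF inj])
  ultimately show ?thesis
    using inj by (simp add: bij_betw_def card_subset_eq)
qed

lemma normal_mono_eq_the_inv_into:
  "normal_mono n f = the_inv_into (normal_set n f) (dlex_rank (normal_set n f))"
  by (simp add: fun_eq_iff normal_mono_def the_inv_into_def dlex_rank_def)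

lemma bij_betw_normal_mono:
  "finite (normal_set n f) \<Longrightarrow> bij_betw (normal_mono n f) {..<card (normal_set n f)} (normal_set n f)"
  by (simp add: normal_mono_eq_the_inv_into bij_betw_the_inv_into bij_betw_dlex_rank)

lemma normal_mono_0:
  assumes "finite (normal_set n f)" "0 \<in> normal_set n f"
  shows "normal_mono n f 0 = 0"
proof -
  have "dlex_rank (normal_set n f) 0 = 0"
    by (simp add: dlex_rank_def not_dlex_less_0)
  then show ?thesis
    using assms bij_betw_imp_inj_on[OF bij_betw_dlex_rank[OF assms(1)]]
    by (metis normal_mono_eq_the_inv_into the_inv_into_f_f)
qed

lemma sum_index_mult_mat:
  fixes u :: "nat \<Rightarrow> 'a::semiring_0"
  assumes "A \<in> carrier_mat w w" "B \<in> carrier_mat w w" "j < w"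
  shows "(\<Sum>i<w. u i * (A * B) $$ (i, j)) = (\<Sum>k<w. (\<Sum>i<w. u i * A $$ (i, k)) * B $$ (k, j))"
proof -
  have "(\<Sum>i<w. u i * (A * B) $$ (i, j)) = (\<Sum>i<w. \<Sum>k<w. u i * A $$ (i, k) * B $$ (k, j))"
    using assms by (intro sum.cong) (auto simp: scalar_prod_def atLeast0LessThan sum_distrib_left mult.assoc)
  also have "\<dots> = (\<Sum>k<w. (\<Sum>i<w. u i * A $$ (i, k)) * B $$ (k, j))"
    by (subst sum.swap) (simp add: sum_distrib_right)
  finally show ?thesis .
qed

lemma dim_foldr_add_mat [simp]:
  "dim_row (foldr (+) Ms (0\<^sub>m w w)) = w" "dim_col (foldr (+) Ms (0\<^sub>m w w)) = w"
  by (induction Ms) auto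

lemma index_foldr_add_mat:
  assumes "i < w" "j < w"
  shows "foldr (+) Ms (0\<^sub>m w w) $$ (i, j) = (\<Sum>M\<leftarrow>Ms. M $$ (i, j))"
  using assms by (induction Ms) auto

lemma G_factor_carrier: "G_factor w d A s \<in> carrier_mat w w"
  unfolding G_factor_def carrier_mat_def by (simp only: dim_foldr_add_mat mem_Collect_eq)

lemma index_G_factor:
  assumes "A \<in> carrier_mat w w" "i < w" "j < w"
  shows "G_factor w d A s $$ (i, j)
    = (\<Sum>k\<le>d. const_poly (1 / fact k) * var_poly s ^ k * const_poly ((A ^\<^sub>m k) $$ (i, j)))"
proof -
  have "G_factor w d A s $$ (i, j)
      = (\<Sum>k\<leftarrow>[0..<Suc d]. const_poly (1 / fact k) * var_poly s ^ k * const_poly ((A ^\<^sub>m k) $$ (i, j)))"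
    using assms by (simp add: G_factor_def index_foldr_add_mat lift_mat_def o_def del: upt_Suc)
  then show ?thesis
    by (simp only: interv_sum_list_conv_sum_set_nat set_upt atLeast0LessThan lessThan_Suc_atMost)
qed

definition G_tail :: "nat \<Rightarrow> nat \<Rightarrow> nat \<Rightarrow> (nat \<Rightarrow> complex mat) \<Rightarrow> nat \<Rightarrow> cpoly mat" where
  "G_tail n w d A s = foldr (*) (map (\<lambda>i. G_factor w d (A i) i) [s..<n]) (1\<^sub>m w)"

lemma G_subst_eq_G_tail: "G_subst n w d A = G_tail n w d A 0"
  by (simp add: G_subst_def G_tail_def)

lemma G_tail_carrier: "G_tail n w d A s \<in> carrier_mat w w"
proof -
  have "foldr (*) (map (\<lambda>i. G_factor w d (A i) i) is) (1\<^sub>m w) \<in> carrier_mat w w" for "is"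
    by (induction "is") (auto intro: mult_carrier_mat G_factor_carrier)
  then show ?thesis
    by (simp add: G_tail_def)
qed

lemma G_tail_Suc: "s < n \<Longrightarrow> G_tail n w d A s = G_factor w d (A s) s * G_tail n w d A (Suc s)"
  by (simp add: G_tail_def upt_conv_Cons)

lemma G_tail_n: "G_tail n w d A n = 1\<^sub>m w"
  by (simp add: G_tail_def)

definition normal_coord :: "nat \<Rightarrow> cpoly \<Rightarrow> cpoly \<Rightarrow> nat \<Rightarrow> complex" where
  "normal_coord n f g j = lookup (normal_form n f g) (normal_mono n f j)"

text \<open>Interpolates between \<open>f\<close> itself (\<open>s = 0\<close>, \<open>b = 0\<close>) and the coefficient
  of \<open>x^b\<close> in \<open>f\<close> (\<open>s = n\<close>).\<close>
definition partial_quotient :: "cpoly \<Rightarrow> nat \<Rightarrow> mono \<Rightarrow> cpoly" where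
  "partial_quotient f s b =
     (\<Sum>m\<in>{m \<in> keys f. \<forall>i<s. lookup m i = lookup b i}. Poly_Mapping.single (m - b) (lookup f m))"

lemma partial_quotient_0: "partial_quotient f 0 0 = f"
  by (simp add: partial_quotient_def poly_mapping_sum_single)

lemma partial_quotient_all_vars:
  assumes "in_vars n f" "keys b \<subseteq> {..<n}"
  shows "partial_quotient f n b = const_poly (lookup f b)"
proof -
  have "m = b" if "m \<in> keys f" "\<forall>i<n. lookup m i = lookup b i" for m
  proof (rule poly_mapping_eqI)
    fix i
    show "lookup m i = lookup b i"
    proof (cases "i < n")
      case False
      then have "i \<notin> keys m" "i \<notin> keys b"
        using that(1) assms by (auto simp: in_vars_def)
      then show ?thesis
        by (simp add: in_keys_iff)
    qed (use that in auto)
  qed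
  then have "{m \<in> keys f. \<forall>i<n. lookup m i = lookup b i} = (if b \<in> keys f then {b} else {})"
    by auto
  then show ?thesis
    by (auto simp: partial_quotient_def const_poly_def in_keys_iff)
qed

lemma partial_quotient_split:
  assumes f: "homogeneous d f" and b: "keys b \<subseteq> {..<s}"
  shows "(\<Sum>k\<le>d. var_poly s ^ k * partial_quotient f (Suc s) (b + Poly_Mapping.single s k))
    = partial_quotient f s b"
proof -
  let ?S = "{m \<in> keys f. \<forall>i<s. lookup m i = lookup b i}"
  let ?term = "\<lambda>m. Poly_Mapping.single (m - b) (lookup f m)"
  have bs: "lookup b s = 0"
    using b by (auto simp: in_keys_iff)
  have "var_poly s ^ k * partial_quotient f (Suc s) (b + Poly_Mapping.single s k)
      = (\<Sum>m\<in>{m \<in> ?S. lookup m s = k}. ?term m)" for k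
  proof -
    have "{m \<in> keys f. \<forall>i<Suc s. lookup m i = lookup (b + Poly_Mapping.single s k) i} = {m \<in> ?S. lookup m s = k}"
      using bs by (auto simp: lookup_add lookup_single when_def less_Suc_eq)
    moreover have "Poly_Mapping.single s k + (m - (b + Poly_Mapping.single s k)) = m - b"
      if "lookup m s = k" for m
      using that bs by (intro poly_mapping_eqI) (auto simp: lookup_add lookup_minus lookup_single when_def)
    ultimately show ?thesis
      unfolding partial_quotient_def var_poly_power
      by (simp add: sum_distrib_left mono_poly_def mult_single)
  qed
  then have "(\<Sum>k\<le>d. var_poly s ^ k * partial_quotient f (Suc s) (b + Poly_Mapping.single s k))
      = (\<Sum>k\<le>d. \<Sum>m\<in>{m \<in> ?S. lookup m s = k}. ?term m)"
    by simp
  also have "\<dots> = (\<Sum>m\<in>?S. ?term m)"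
  proof (rule sum.group)
    show "(\<lambda>m. lookup m s) ` ?S \<subseteq> {..d}"
      using f lookup_le_tdeg by (fastforce simp: homogeneous_def)
  qed auto
  finally show ?thesis
    by (simp add: partial_quotient_def)
qed

subsection \<open>The first row of \<open>G\<close>\<close>

locale apolar_setup =
  fixes n d :: nat and f :: cpoly
  assumes in_vars_f: "in_vars n f" and homogeneous_f: "homogeneous d f" and f_nonzero: "f \<noteq> 0"
begin

abbreviation N :: "mono set" where
  "N \<equiv> normal_set n f"

abbreviation w :: nat where
  "w \<equiv> card N"

abbreviation A :: "nat \<Rightarrow> complex mat" where
  "A \<equiv> mult_table n f w"

lemma finite_N: "finite N"
  by (rule finite_normal_set[OF homogeneous_f])

lemma normal_mono_bij: "bij_betw (normal_mono n f) {..<w} N"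
  by (rule bij_betw_normal_mono[OF finite_N])

lemma normal_mono_in_vars: "i < w \<Longrightarrow> keys (normal_mono n f i) \<subseteq> {..<n}"
  using bij_betw_apply[OF normal_mono_bij] by (auto simp: normal_set_def)

lemma A_carrier: "A l \<in> carrier_mat w w"
  by (simp add: mult_table_def)

lemma normal_form_expansion:
  assumes "in_vars n g"
  shows "normal_form n f g = (\<Sum>i<w. const_poly (normal_coord n f g i) * mono_poly (normal_mono n f i))"
proof -
  have "normal_form n f g = (\<Sum>m\<in>keys (normal_form n f g). Poly_Mapping.single m (lookup (normal_form n f g) m))"
    by (rule poly_mapping_sum_single[symmetric])
  also have "\<dots> = (\<Sum>m\<in>N. Poly_Mapping.single m (lookup (normal_form n f g) m))"
    using normal_form(1)[OF assms] finite_N by (intro sum.mono_neutral_left) (auto simp: in_keys_iff)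
  also have "\<dots> = (\<Sum>i<w. Poly_Mapping.single (normal_mono n f i) (normal_coord n f g i))"
    by (simp add: sum.reindex_bij_betw[OF normal_mono_bij, symmetric] normal_coord_def)
  finally show ?thesis
    by (simp add: single_eq_const_poly_mult)
qed

lemma pairing_eq_sum_normal_coord:
  assumes "in_vars n g"
  shows "pairing g (dp_coeff f) = (\<Sum>j<w. dp_coeff f (normal_mono n f j) * normal_coord n f g j)"
proof -
  have "deriv_op g f = deriv_op (normal_form n f g) f"
    using normal_form(2)[OF assms] by (simp add: mem_apolar_iff deriv_op_diff)
  then have "pairing g (dp_coeff f) = pairing (normal_form n f g) (dp_coeff f)"
    by (metis lookup_deriv_op_0)
  also have "\<dots> = (\<Sum>m\<in>N. lookup (normal_form n f g) m * dp_coeff f m)"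
    by (rule pairing_superset[OF finite_N normal_form(1)[OF assms]])
  also have "\<dots> = (\<Sum>j<w. dp_coeff f (normal_mono n f j) * normal_coord n f g j)"
    by (simp add: sum.reindex_bij_betw[OF normal_mono_bij, symmetric] normal_coord_def mult.commute)
  finally show ?thesis .
qed

lemma normal_coord_var_mult:
  assumes g: "in_vars n g" and l: "l < n" and j: "j < w"
  shows "normal_coord n f (var_poly l * g) j = (\<Sum>i<w. normal_coord n f g i * A l $$ (i, j))"
proof -
  let ?P = "\<lambda>i. var_poly l * mono_poly (normal_mono n f i)"
  define R where "R = (\<Sum>i<w. const_poly (normal_coord n f g i) * normal_form n f (?P i))"
  have P: "in_vars n (?P i)" if "i < w" for i
    using that by (intro in_vars_mult in_vars_var_poly[OF l] in_vars_mono_poly normal_mono_in_vars)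
  have "var_poly l * g - R = var_poly l * (g - normal_form n f g)
      + (\<Sum>i<w. const_poly (normal_coord n f g i) * (?P i - normal_form n f (?P i)))"
    by (simp add: R_def normal_form_expansion[OF g] algebra_simps sum_subtractf sum_distrib_left)
  also have "\<dots> \<in> apolar n f"
    using normal_form(2) g P by (intro apolar_add apolar_mult apolar_sum apolar_const_poly_mult in_vars_var_poly l) auto
  finally have "var_poly l * g - R \<in> apolar n f" .
  moreover have "keys R \<subseteq> N"
  proof -
    have "keys R \<subseteq> (\<Union>i<w. keys (const_poly (normal_coord n f g i) * normal_form n f (?P i)))"
      unfolding R_def by (rule keys_sum)
    also have "\<dots> \<subseteq> N"
      using normal_form(1)[OF P] by (force simp: in_keys_iff lookup_const_poly_mult)
    finally show ?thesis .
  qed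
  ultimately have "normal_form n f (var_poly l * g) = R"
    by (rule normal_form_eqI[rotated])
  then show ?thesis
    using j by (simp add: normal_coord_def R_def lookup_sum lookup_const_poly_mult mult_table_def)
qed

lemma normal_coord_var_power_mult:
  assumes g: "in_vars n g" and l: "l < n" and j: "j < w"
  shows "normal_coord n f (var_poly l ^ k * g) j = (\<Sum>i<w. normal_coord n f g i * (A l ^\<^sub>m k) $$ (i, j))"
  using j
proof (induction k arbitrary: j)
  case 0
  then show ?case
    by (simp add: mult_table_def if_distrib sum.delta cong: if_cong)
next
  case (Suc k)
  have "(\<Sum>i<w. normal_coord n f g i * (A l ^\<^sub>m Suc k) $$ (i, j))
      = (\<Sum>a<w. (\<Sum>i<w. normal_coord n f g i * (A l ^\<^sub>m k) $$ (i, a)) * A l $$ (a, j))"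
    using Suc.prems by (simp add: sum_index_mult_mat[OF pow_carrier_mat[OF A_carrier] A_carrier])
  also have "\<dots> = normal_coord n f (var_poly l * (var_poly l ^ k * g)) j"
    using Suc.IH normal_coord_var_mult[OF in_vars_mult[OF in_vars_power[OF in_vars_var_poly[OF l]] g] l Suc.prems]
    by simp
  finally show ?case
    by (simp add: mult.assoc)
qed

lemma zero_in_N: "0 \<in> N"
  by (rule zero_in_normal_set[OF f_nonzero])

lemma w_pos: "0 < w"
  using zero_in_N finite_N by (auto simp: card_gt_0_iff)

lemma normal_coord_1:
  assumes "i < w"
  shows "normal_coord n f 1 i = (if i = 0 then 1 else 0)"
proof -
  have "normal_form n f 1 = 1"
    using zero_in_N by (intro normal_form_eqI) auto
  moreover have "normal_mono n f i = 0 \<longleftrightarrow> i = 0"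
    using normal_mono_0[OF finite_N zero_in_N] bij_betw_imp_inj_on[OF normal_mono_bij] assms w_pos
    by (metis inj_onD lessThan_iff)
  ultimately show ?thesis
    by (simp add: normal_coord_def lookup_one when_def)
qed

lemma row_G_factor_mult:
  assumes Q: "Q \<in> carrier_mat w w" and g: "in_vars n g" and s: "s < n" and j: "j < w"
  shows "(\<Sum>i<w. const_poly (normal_coord n f g i) * (G_factor w d (A s) s * Q) $$ (i, j))
    = (\<Sum>k\<le>d. const_poly (1 / fact k) * var_poly s ^ k *
        (\<Sum>a<w. const_poly (normal_coord n f (var_poly s ^ k * g) a) * Q $$ (a, j)))"
proof -
  have row: "(\<Sum>i<w. const_poly (normal_coord n f g i) * G_factor w d (A s) s $$ (i, a))
      = (\<Sum>k\<le>d. const_poly (1 / fact k) * var_poly s ^ k * const_poly (normal_coord n f (var_poly s ^ k * g) a))"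
    if a: "a < w" for a
  proof -
    have "(\<Sum>i<w. const_poly (normal_coord n f g i) * G_factor w d (A s) s $$ (i, a))
        = (\<Sum>i<w. \<Sum>k\<le>d. const_poly (1 / fact k) * var_poly s ^ k *
            const_poly (normal_coord n f g i * (A s ^\<^sub>m k) $$ (i, a)))"
      using a by (intro sum.cong refl)
        (simp add: index_G_factor[OF A_carrier] sum_distrib_left const_poly_mult mult_ac)
    also have "\<dots> = (\<Sum>k\<le>d. const_poly (1 / fact k) * var_poly s ^ k *
        const_poly (\<Sum>i<w. normal_coord n f g i * (A s ^\<^sub>m k) $$ (i, a)))"
      by (subst sum.swap) (simp add: const_poly_sum sum_distrib_left)
    finally show ?thesis
      using normal_coord_var_power_mult[OF g s a] by simp
  qed
  have "(\<Sum>i<w. const_poly (normal_coord n f g i) * (G_factor w d (A s) s * Q) $$ (i, j))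
      = (\<Sum>a<w. (\<Sum>i<w. const_poly (normal_coord n f g i) * G_factor w d (A s) s $$ (i, a)) * Q $$ (a, j))"
    by (rule sum_index_mult_mat[OF G_factor_carrier Q j])
  also have "\<dots> = (\<Sum>a<w. \<Sum>k\<le>d. const_poly (1 / fact k) * var_poly s ^ k *
      (const_poly (normal_coord n f (var_poly s ^ k * g) a) * Q $$ (a, j)))"
    by (intro sum.cong refl) (simp add: row sum_distrib_right mult.assoc)
  also have "\<dots> = (\<Sum>k\<le>d. const_poly (1 / fact k) * var_poly s ^ k *
      (\<Sum>a<w. const_poly (normal_coord n f (var_poly s ^ k * g) a) * Q $$ (a, j)))"
    by (subst sum.swap) (simp add: sum_distrib_left)
  finally show ?thesis .
qed

text \<open>The coordinate row of \<open>[g]\<close> times the last \<open>n - s\<close> factors of \<open>G\<close>, paired with \<open>v\<close>;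
  the theorem is the case \<open>s = 0\<close>, \<open>g = 1\<close>.\<close>
definition weighted_row :: "nat \<Rightarrow> cpoly \<Rightarrow> cpoly" where
  "weighted_row s g = (\<Sum>j<w. const_poly (dp_coeff f (normal_mono n f j)) *
     (\<Sum>i<w. const_poly (normal_coord n f g i) * G_tail n w d A s $$ (i, j)))"

lemma weighted_row_n:
  assumes "in_vars n g"
  shows "weighted_row n g = const_poly (pairing g (dp_coeff f))"
proof -
  have "(\<Sum>i<w. const_poly (normal_coord n f g i) * G_tail n w d A n $$ (i, j)) = const_poly (normal_coord n f g j)"
    if "j < w" for j
    using that by (simp add: G_tail_n if_distrib sum.delta' cong: if_cong)
  then show ?thesis
    by (simp add: weighted_row_def pairing_eq_sum_normal_coord[OF assms] const_poly_sum const_poly_mult)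
qed

lemma weighted_row_Suc:
  assumes "s < n" "in_vars n g"
  shows "weighted_row s g = (\<Sum>k\<le>d. const_poly (1 / fact k) * var_poly s ^ k *
    weighted_row (Suc s) (var_poly s ^ k * g))"
proof -
  let ?row = "\<lambda>k j. \<Sum>a<w. const_poly (normal_coord n f (var_poly s ^ k * g) a) * G_tail n w d A (Suc s) $$ (a, j)"
  have "weighted_row s g = (\<Sum>j<w. const_poly (dp_coeff f (normal_mono n f j)) *
      (\<Sum>k\<le>d. const_poly (1 / fact k) * var_poly s ^ k * ?row k j))"
    unfolding weighted_row_def G_tail_Suc[OF assms(1)]
    by (intro sum.cong refl) (simp add: row_G_factor_mult[OF G_tail_carrier assms(2,1)])
  also have "\<dots> = (\<Sum>j<w. \<Sum>k\<le>d. const_poly (1 / fact k) * var_poly s ^ k *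
      (const_poly (dp_coeff f (normal_mono n f j)) * ?row k j))"
    by (simp add: sum_distrib_left mult_ac)
  also have "\<dots> = (\<Sum>k\<le>d. \<Sum>j<w. const_poly (1 / fact k) * var_poly s ^ k *
      (const_poly (dp_coeff f (normal_mono n f j)) * ?row k j))"
    by (rule sum.swap)
  also have "\<dots> = (\<Sum>k\<le>d. const_poly (1 / fact k) * var_poly s ^ k * weighted_row (Suc s) (var_poly s ^ k * g))"
    by (simp add: weighted_row_def sum_distrib_left)
  finally show ?thesis .
qed

lemma weighted_row_mono_poly:
  assumes "s \<le> n" "keys b \<subseteq> {..<s}"
  shows "weighted_row s (mono_poly b) = const_poly (mfact b) * partial_quotient f s b"
  using assms
proof (induction "n - s" arbitrary: s b)
  case 0
  then have "s = n"
    by simp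
  then show ?case
    using 0 by (simp add: weighted_row_n in_vars_mono_poly partial_quotient_all_vars[OF in_vars_f]
        dp_coeff_def const_poly_mult mult.commute)
next
  case (Suc k)
  then have s: "s < n" and k: "k = n - Suc s"
    by auto
  have "s \<notin> keys b"
    using Suc.prems(2) by auto
  have "keys b \<subseteq> {..<n}"
    using Suc.prems(2) s by auto
  then have "weighted_row s (mono_poly b) = (\<Sum>e\<le>d. const_poly (1 / fact e) * var_poly s ^ e *
      weighted_row (Suc s) (mono_poly (b + Poly_Mapping.single s e)))"
    using weighted_row_Suc[OF s in_vars_mono_poly] by (simp add: var_poly_power mono_poly_mult add.commute)
  also have "\<dots> = (\<Sum>e\<le>d. const_poly (mfact b) *
      (var_poly s ^ e * partial_quotient f (Suc s) (b + Poly_Mapping.single s e)))"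
  proof (rule sum.cong[OF refl])
    fix e
    let ?b = "b + Poly_Mapping.single s e"
    have "keys ?b \<subseteq> {..<Suc s}"
      using Suc.prems(2) by (auto simp: keys_add_mono)
    then have "weighted_row (Suc s) (mono_poly ?b) = const_poly (mfact b * fact e) * partial_quotient f (Suc s) ?b"
      using Suc.hyps(1)[OF k] s mfact_add_single[OF \<open>s \<notin> keys b\<close>] by simp
    then have "const_poly (1 / fact e) * var_poly s ^ e * weighted_row (Suc s) (mono_poly ?b)
        = (const_poly (1 / fact e) * const_poly (mfact b * fact e)) * (var_poly s ^ e * partial_quotient f (Suc s) ?b)"
      by (simp only: mult_ac)
    also have "const_poly (1 / fact e) * const_poly (mfact b * fact e) = const_poly (mfact b)"
      by (simp flip: const_poly_mult)
    finally show "const_poly (1 / fact e) * var_poly s ^ e * weighted_row (Suc s) (mono_poly ?b)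
        = const_poly (mfact b) * (var_poly s ^ e * partial_quotient f (Suc s) ?b)" .
  qed
  also have "\<dots> = const_poly (mfact b) * partial_quotient f s b"
    by (simp add: sum_distrib_left[symmetric] partial_quotient_split[OF homogeneous_f Suc.prems(2)])
  finally show ?case .
qed

lemma first_row_G_subst:
  "(\<Sum>j<w. const_poly (dp_coeff f (normal_mono n f j)) * G_subst n w d A $$ (0, j)) = f"
proof -
  have "(\<Sum>i<w. const_poly (normal_coord n f 1 i) * G_tail n w d A 0 $$ (i, j)) = G_tail n w d A 0 $$ (0, j)" for j
  proof -
    have "(\<Sum>i<w. const_poly (normal_coord n f 1 i) * G_tail n w d A 0 $$ (i, j))
        = (\<Sum>i<w. if i = 0 then G_tail n w d A 0 $$ (0, j) else 0)"
      by (rule sum.cong) (auto simp: normal_coord_1)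
    then show ?thesis
      using w_pos by simp
  qed
  then have "(\<Sum>j<w. const_poly (dp_coeff f (normal_mono n f j)) * G_subst n w d A $$ (0, j)) = weighted_row 0 1"
    by (simp add: weighted_row_def G_subst_eq_G_tail)
  also have "\<dots> = f"
    using weighted_row_mono_poly[of 0 0] by (simp add: partial_quotient_0)
  finally show ?thesis .
qed

end

theorem lemma3p5:
  fixes n d w :: nat and f :: cpoly
  assumes "in_vars n f"
    and "homogeneous d f"
    and "dim_partials f = w"
  shows "\<exists>v :: complex vec. dim_vec v = w \<and>
    (\<Sum>j<w. const_poly (v $ j) * (G_subst n w d (mult_table n f w)) $$ (0, j)) = f"
proof (cases "f = 0")
  case True
  then show ?thesis
    by (intro exI[of _ "0\<^sub>v w"]) simp
next
  case False
  then interpret apolar_setup n d f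
    using assms(1,2) by unfold_locales
  have "w = card (normal_set n f)"
    using assms(3) dim_partials_eq_card_normal_set[OF assms(1) finite_N] by simp
  then show ?thesis
    using first_row_G_subst by (intro exI[of _ "vec w (\<lambda>j. dp_coeff f (normal_mono n f j))"]) simp
qed

end
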